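(* Let $\mathcal E$ be either an energy-preserving channel or, more generally, a unital average-energy non-increasing channel on $S$, let $\tau\in\mathsf P(S)$ be a passive state, let $p\in[0,1]$, and define the channel $\mathcal C(\rho)=p\,\mathcal E(\rho)+(1-p)\,\tau$. Then $\mathsf{Erg}(\mathcal C(\rho))\le \mathsf{Erg}(\rho)$ for every state $\rho\in\mathsf{St}(S)$. In particular every channel obtained by energy-preserving channels and passive resets (EPCPR) is ergotropy non-increasing.
   Context: $S$ is a $d$-dimensional quantum system with non-degenerate Hamiltonian $H=\sum_{i=1}^d E_i|i\rangle\langle i|$, $E_1<E_2<\dots<E_d$; $\mathsf{St}(S)$ is the set of density matrices on $\mathbb C^d$. The ergotropy of $\rho$ is $\mathsf{Erg}(\rho)=\mathrm{Tr}[H\rho]-\min_U \mathrm{Tr}[HU\rho U^\dagger]$, minimum over all unitaries $U$. A state is passive if its ergotropy is zero; equivalently, it is of the form $\sum_i p_i|i\rangle\langle i|$ with $p_1\ge p_2\ge\dots\ge p_d$. $\mathsf P(S)$ denotes the set of passive states. An energy-preserving channel is a quantum channel (CPTP map) $\mathcal E$ with $\langle i|\mathcal E(\rho)|i\rangle=\langle i|\rho|i\rangle$ for all states $\rho$ and all $i$. A unital average-energy non-increasing channel is a quantum channel $\mathcal E$ with $\mathcal E(I)=I$ and $\mathrm{Tr}[H\mathcal E(\rho)]\le\mathrm{Tr}[H\rho]$ for all states $\rho$. *)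

theory Defs
  imports Complex_Main "Jordan_Normal_Form.Matrix"
begin

text \<open>Finite-dimensional quantum system of dimension d, matrices over the complex numbers
  indexed by 0..d-1 (the energy eigenbasis |i> corresponds to index i).\<close>

definition adj :: "complex mat \<Rightarrow> complex mat" where
  "adj A = mat (dim_col A) (dim_row A) (\<lambda>(i,j). cnj (A $$ (j,i)))"

definition mtrace :: "complex mat \<Rightarrow> complex" where
  "mtrace A = (\<Sum>i<dim_row A. A $$ (i,i))"

definition hermitian :: "complex mat \<Rightarrow> bool" where
  "hermitian A \<longleftrightarrow> adj A = A"

definition psd :: "nat \<Rightarrow> complex mat \<Rightarrow> bool" where
  "psd d A \<longleftrightarrow> A \<in> carrier_mat d d \<and> hermitian A \<and>
     (\<forall>v \<in> carrier_vec d. 0 \<le> Re (conjugate v \<bullet> (A *\<^sub>v v)) )"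

definition density :: "nat \<Rightarrow> complex mat \<Rightarrow> bool" where
  "density d \<rho> \<longleftrightarrow> psd d \<rho> \<and> mtrace \<rho> = 1"

definition unitary :: "nat \<Rightarrow> complex mat \<Rightarrow> bool" where
  "unitary d U \<longleftrightarrow> U \<in> carrier_mat d d \<and> adj U * U = 1\<^sub>m d \<and> U * adj U = 1\<^sub>m d"

definition hamiltonian :: "nat \<Rightarrow> (nat \<Rightarrow> real) \<Rightarrow> complex mat" where
  "hamiltonian d En = mat d d (\<lambda>(i,j). if i = j then complex_of_real (En i) else 0)"

definition energy :: "nat \<Rightarrow> (nat \<Rightarrow> real) \<Rightarrow> complex mat \<Rightarrow> real" where
  "energy d En \<rho> = Re (mtrace (hamiltonian d En * \<rho>))"

text \<open>Ergotropy: Tr[H rho] - min_U Tr[H U rho U^dagger] (minimum written as infimum,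
  which is attained since the unitary group is compact).\<close>
definition ergotropy :: "nat \<Rightarrow> (nat \<Rightarrow> real) \<Rightarrow> complex mat \<Rightarrow> real" where
  "ergotropy d En \<rho> = energy d En \<rho> -
     (INF U \<in> {U. unitary d U}. energy d En (U * \<rho> * adj U))"

definition passive_state :: "nat \<Rightarrow> (nat \<Rightarrow> real) \<Rightarrow> complex mat \<Rightarrow> bool" where
  "passive_state d En \<rho> \<longleftrightarrow> density d \<rho> \<and> ergotropy d En \<rho> = 0"

definition quantum_channel :: "nat \<Rightarrow> (complex mat \<Rightarrow> complex mat) \<Rightarrow> bool" where
  "quantum_channel d \<Phi> \<longleftrightarrow> (\<exists>Ks :: complex mat list.
      (\<forall>K \<in> set Ks. K \<in> carrier_mat d d) \<and>
      foldr (\<lambda>K acc. adj K * K + acc) Ks (0\<^sub>m d d) = 1\<^sub>m d \<and>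
      (\<forall>\<rho> \<in> carrier_mat d d. \<Phi> \<rho> = foldr (\<lambda>K acc. K * \<rho> * adj K + acc) Ks (0\<^sub>m d d)))"

definition energy_preserving :: "nat \<Rightarrow> (complex mat \<Rightarrow> complex mat) \<Rightarrow> bool" where
  "energy_preserving d \<Phi> \<longleftrightarrow> quantum_channel d \<Phi> \<and>
     (\<forall>\<rho>. density d \<rho> \<longrightarrow> (\<forall>i<d. \<Phi> \<rho> $$ (i,i) = \<rho> $$ (i,i)))"

definition unital_energy_nonincreasing ::
  "nat \<Rightarrow> (nat \<Rightarrow> real) \<Rightarrow> (complex mat \<Rightarrow> complex mat) \<Rightarrow> bool" where
  "unital_energy_nonincreasing d En \<Phi> \<longleftrightarrow> quantum_channel d \<Phi> \<and> \<Phi> (1\<^sub>m d) = 1\<^sub>m d \<and>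
     (\<forall>\<rho>. density d \<rho> \<longrightarrow> energy d En (\<Phi> \<rho>) \<le> energy d En \<rho>)"

end

theory Submission
  imports Defs "Jordan_Normal_Form.Schur_Decomposition" "Jordan_Normal_Form.Spectral_Radius"
    "HOL-Combinatorics.Permutations"
begin

text \<open>Diagonalize \<open>\<rho> = W diag(\<lambda>) W\<^sup>\<dagger>\<close>. For a unital channel with Kraus operators \<open>K\<close>, the
  populations of the output are \<open>\<Sum>\<^sub>j M\<^sub>i\<^sub>j \<lambda>\<^sub>j\<close> with \<open>M\<^sub>i\<^sub>j = \<Sum>\<^sub>K |(K W)\<^sub>i\<^sub>j|\<^sup>2\<close> doubly
  stochastic, so by a rearrangement inequality some permutation of the spectrum has no more
  energy. Hence the passive energy \<open>min\<^sub>U Tr[H U \<rho> U\<^sup>\<dagger>]\<close> does not decrease under a unital channel,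
  and ergotropy does not increase if the channel does not increase the mean energy.
  Energy-preserving channels are unital, because their Kraus operators are diagonal. Finally,
  ergotropy is convex (energy is linear and passive energy concave) and vanishes on the passive
  state \<open>\<tau>\<close>, so \<open>Erg(p \<E>(\<rho>) + (1 - p) \<tau>) \<le> p Erg(\<E>(\<rho>)) \<le> Erg(\<rho>)\<close>.\<close>

lemma adj_dim [simp]: "dim_row (adj A) = dim_col A" "dim_col (adj A) = dim_row A"
  unfolding adj_def by auto

lemma adj_index [simp]: "i < dim_col A \<Longrightarrow> j < dim_row A \<Longrightarrow> adj A $$ (i,j) = cnj (A $$ (j,i))"
  unfolding adj_def by auto

lemma adj_carrier [simp, intro]: "A \<in> carrier_mat n m \<Longrightarrow> adj A \<in> carrier_mat m n"
  unfolding adj_def by auto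

lemma adj_adj [simp]: "adj (adj A) = A"
  by (rule eq_matI) auto

lemma adj_one [simp]: "adj (1\<^sub>m n) = 1\<^sub>m n"
  by (rule eq_matI) auto

lemma adj_mult:
  assumes "A \<in> carrier_mat n k" "B \<in> carrier_mat k m"
  shows "adj (A * B) = adj B * adj A"
  by (rule eq_matI) (use assms in \<open>auto simp: scalar_prod_def cnj_sum mult.commute intro!: sum.cong\<close>)

lemma sandwich_mult:
  assumes "A \<in> carrier_mat n n" "B \<in> carrier_mat n n" "X \<in> carrier_mat n n"
  shows "(A * B) * X * adj (A * B) = A * (B * X * adj B) * adj A"
  using assms by (simp add: adj_mult assoc_mult_mat[of _ n n _ n _ n] mult_carrier_mat[of _ n n _ n])

definition diagm :: "nat \<Rightarrow> (nat \<Rightarrow> real) \<Rightarrow> complex mat" where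
  "diagm n lam = mat n n (\<lambda>(i,j). if i = j then complex_of_real (lam i) else 0)"

lemma diagm_carrier [simp]: "diagm n lam \<in> carrier_mat n n"
  unfolding diagm_def by auto

lemma diagm_dim [simp]: "dim_row (diagm n lam) = n" "dim_col (diagm n lam) = n"
  unfolding diagm_def by auto

lemma hamiltonian_eq_diagm: "hamiltonian d En = diagm d En"
  unfolding hamiltonian_def diagm_def ..

lemma index_mult_diagm:
  assumes X: "X \<in> carrier_mat n k" and i: "i < n" and j: "j < k"
  shows "(X * diagm k lam) $$ (i,j) = X $$ (i,j) * complex_of_real (lam j)"
proof -
  have "(X * diagm k lam) $$ (i,j) = (\<Sum>l\<in>{0..<k}. X $$ (i,l) * diagm k lam $$ (l,j))"
    using X i j by (simp add: scalar_prod_def)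
  also have "\<dots> = (\<Sum>l\<in>{j}. X $$ (i,l) * diagm k lam $$ (l,j))"
    using j by (intro sum.mono_neutral_right) (auto simp: diagm_def)
  finally show ?thesis using j by (simp add: diagm_def)
qed

lemma index_diagm_mult:
  assumes X: "X \<in> carrier_mat n k" and i: "i < n" and j: "j < k"
  shows "(diagm n lam * X) $$ (i,j) = complex_of_real (lam i) * X $$ (i,j)"
proof -
  have "(diagm n lam * X) $$ (i,j) = (\<Sum>l\<in>{0..<n}. diagm n lam $$ (i,l) * X $$ (l,j))"
    using X i j by (simp add: scalar_prod_def)
  also have "\<dots> = (\<Sum>l\<in>{i}. diagm n lam $$ (i,l) * X $$ (l,j))"
    using i by (intro sum.mono_neutral_right) (auto simp: diagm_def)
  finally show ?thesis using i by (simp add: diagm_def)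
qed

lemma diag_sandwich_diagm:
  assumes X: "X \<in> carrier_mat n k" and i: "i < n"
  shows "(X * diagm k lam * adj X) $$ (i,i) = complex_of_real (\<Sum>j<k. (cmod (X $$ (i,j)))\<^sup>2 * lam j)"
proof -
  have "(X * diagm k lam * adj X) $$ (i,i) = (\<Sum>j\<in>{0..<k}. (X * diagm k lam) $$ (i,j) * cnj (X $$ (i,j)))"
    using X i by (simp add: scalar_prod_def)
  also have "\<dots> = (\<Sum>j<k. complex_of_real (lam j) * (X $$ (i,j) * cnj (X $$ (i,j))))"
    using X i by (intro sum.cong) (auto simp: index_mult_diagm mult_ac simp del: index_mult_mat(1))
  also have "\<dots> = (\<Sum>j<k. complex_of_real ((cmod (X $$ (i,j)))\<^sup>2 * lam j))"
    by (simp only: complex_norm_square[symmetric] of_real_mult mult.commute)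
  finally show ?thesis by simp
qed

lemma diag_mult_adj:
  assumes X: "X \<in> carrier_mat n k" and i: "i < n"
  shows "(X * adj X) $$ (i,i) = complex_of_real (\<Sum>j<k. (cmod (X $$ (i,j)))\<^sup>2)"
proof -
  have "X * diagm k (\<lambda>_. 1) = X"
    using X by (intro eq_matI) (auto simp: index_mult_diagm[OF X] simp del: index_mult_mat(1))
  then show ?thesis using diag_sandwich_diagm[OF X i, of "\<lambda>_. 1"] by simp
qed

lemma diag_adj_mult:
  assumes X: "X \<in> carrier_mat n k" and j: "j < k"
  shows "(adj X * X) $$ (j,j) = complex_of_real (\<Sum>i<n. (cmod (X $$ (i,j)))\<^sup>2)"
  using diag_mult_adj[OF adj_carrier[OF X] j] X j by simp

lemma unitary_carrier: "unitary n U \<Longrightarrow> U \<in> carrier_mat n n"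
  unfolding unitary_def by auto

lemma unitary_one: "unitary n (1\<^sub>m n)"
  unfolding unitary_def by simp

lemma unitary_adj: "unitary n U \<Longrightarrow> unitary n (adj U)"
  unfolding unitary_def by auto

lemma unitary_mult:
  assumes U: "unitary n U" and V: "unitary n V"
  shows "unitary n (U * V)"
proof -
  have Uc: "U \<in> carrier_mat n n" and Vc: "V \<in> carrier_mat n n"
    using U V unitary_carrier by auto
  have "adj (U * V) * (U * V) = adj V * (adj U * U) * V"
    using Uc Vc by (simp add: adj_mult assoc_mult_mat[of _ n n _ n _ n] mult_carrier_mat[of _ n n _ n])
  also have "\<dots> = 1\<^sub>m n" using U V Vc unfolding unitary_def by simp
  finally have left: "adj (U * V) * (U * V) = 1\<^sub>m n" .
  have "(U * V) * adj (U * V) = 1\<^sub>m n"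
    by (rule mat_mult_left_right_inverse[OF _ _ left]) (use Uc Vc in auto)
  then show ?thesis unfolding unitary_def using left Uc Vc by auto
qed

lemma unitary_row_norm:
  assumes U: "unitary n U" and i: "i < n"
  shows "(\<Sum>j<n. (cmod (U $$ (i,j)))\<^sup>2) = 1"
proof -
  have "complex_of_real (\<Sum>j<n. (cmod (U $$ (i,j)))\<^sup>2) = (U * adj U) $$ (i,i)"
    using diag_mult_adj[OF unitary_carrier[OF U] i] by simp
  also have "\<dots> = 1" using U i unfolding unitary_def by simp
  finally show ?thesis by (metis of_real_eq_1_iff)
qed

lemma energy_eq_sum:
  assumes "X \<in> carrier_mat d d"
  shows "energy d En X = (\<Sum>i<d. En i * Re (X $$ (i,i)))"
proof -
  have "energy d En X = (\<Sum>i<d. Re ((diagm d En * X) $$ (i,i)))"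
    unfolding energy_def mtrace_def hamiltonian_eq_diagm by (simp add: Re_sum)
  also have "\<dots> = (\<Sum>i<d. En i * Re (X $$ (i,i)))"
    using assms by (intro sum.cong refl) (simp add: index_diagm_mult del: index_mult_mat(1))
  finally show ?thesis .
qed

lemma energy_add:
  assumes "X \<in> carrier_mat d d" "Y \<in> carrier_mat d d"
  shows "energy d En (X + Y) = energy d En X + energy d En Y"
  using assms by (simp add: energy_eq_sum sum.distrib distrib_left)

lemma energy_smult:
  assumes "X \<in> carrier_mat d d"
  shows "energy d En (complex_of_real r \<cdot>\<^sub>m X) = r * energy d En X"
  using assms by (simp add: energy_eq_sum sum_distrib_left mult_ac)

lemma energy_sandwich_diagm:
  assumes X: "X \<in> carrier_mat d d"
  shows "energy d En (X * diagm d lam * adj X) = (\<Sum>i<d. En i * (\<Sum>j<d. (cmod (X $$ (i,j)))\<^sup>2 * lam j))"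
proof -
  have "X * diagm d lam * adj X \<in> carrier_mat d d" using X by auto
  then show ?thesis by (simp add: energy_eq_sum diag_sandwich_diagm[OF X])
qed


section \<open>Spectral theorem for Hermitian matrices\<close>

definition normalize_vec :: "complex vec \<Rightarrow> complex vec" where
  "normalize_vec v = complex_of_real (1 / sqrt (Re (v \<bullet>c v))) \<cdot>\<^sub>v v"

lemma cscalar_prod_real_smult:
  assumes "v \<in> carrier_vec n" "w \<in> carrier_vec n"
  shows "(complex_of_real a \<cdot>\<^sub>v v) \<bullet>c (complex_of_real b \<cdot>\<^sub>v w) = complex_of_real (a * b) * (v \<bullet>c w)"
  using assms by (simp add: conjugate_smult_vec smult_scalar_prod_distrib scalar_prod_smult_distrib)

lemma normalize_vec_carrier [simp]: "v \<in> carrier_vec n \<Longrightarrow> normalize_vec v \<in> carrier_vec n"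
  unfolding normalize_vec_def by simp

lemma normalize_vec_norm:
  assumes v: "v \<in> carrier_vec n" "v \<noteq> 0\<^sub>v n"
  shows "normalize_vec v \<bullet>c normalize_vec v = 1"
proof -
  have "v \<bullet>c v > 0" using v by simp
  then have pos: "Re (v \<bullet>c v) > 0" and real: "v \<bullet>c v = complex_of_real (Re (v \<bullet>c v))"
    by (auto simp: less_complex_def complex_eq_iff)
  show ?thesis
    unfolding normalize_vec_def cscalar_prod_real_smult[OF v(1) v(1)]
    by (subst real) (use pos in \<open>simp flip: of_real_mult\<close>)
qed

lemma normalize_vec_orthogonal:
  assumes "v \<in> carrier_vec n" "w \<in> carrier_vec n" "v \<bullet>c w = 0"
  shows "normalize_vec v \<bullet>c normalize_vec w = 0"
  unfolding normalize_vec_def cscalar_prod_real_smult[OF assms(1,2)] using assms(3) by simp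

lemma unitary_mat_of_cols:
  assumes len: "length us = n" and us: "set us \<subseteq> carrier_vec n"
    and orth: "\<And>i j. i < n \<Longrightarrow> j < n \<Longrightarrow> us ! j \<bullet>c us ! i = (if i = j then 1 else 0)"
  shows "unitary n (mat_of_cols n us)"
proof -
  define W where "W = mat_of_cols n us"
  have W: "W \<in> carrier_mat n n" unfolding W_def using len by auto
  have left: "adj W * W = 1\<^sub>m n"
  proof (rule eq_matI)
    fix i j assume "i < dim_row (1\<^sub>m n)" "j < dim_col (1\<^sub>m n)"
    then have i: "i < n" and j: "j < n" by auto
    have usij: "us ! i \<in> carrier_vec n" "us ! j \<in> carrier_vec n" using us len i j by auto
    have "(adj W * W) $$ (i,j) = (\<Sum>k\<in>{0..<n}. us ! j $ k * cnj (us ! i $ k))"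
      using W i j len unfolding W_def
      by (auto simp: scalar_prod_def mat_of_cols_index mult.commute intro!: sum.cong)
    also have "\<dots> = us ! j \<bullet>c us ! i" using usij by (simp add: scalar_prod_def)
    finally show "(adj W * W) $$ (i,j) = 1\<^sub>m n $$ (i,j)" using orth[OF i j] i j by simp
  qed (use W in auto)
  have "W * adj W = 1\<^sub>m n"
    by (rule mat_mult_left_right_inverse[OF adj_carrier[OF W] W left])
  then show ?thesis using W left unfolding unitary_def W_def by blast
qed

text \<open>Gram--Schmidt applied to a basis completion of \<open>v\<close>, followed by normalization.\<close>

lemma unitary_completion:
  assumes v: "v \<in> carrier_vec n" "v \<noteq> 0\<^sub>v n"
  shows "\<exists>W. unitary n W \<and> col W 0 = normalize_vec v"
proof -
  interpret cof_vec_space n "TYPE(complex)" .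
  have n: "n > 0" using v by (metis carrier_vecD eq_vecI index_zero_vec(2) less_nat_zero_code neq0_conv)
  from basis_completion[OF v]
  obtain b where dist_b: "distinct b" and indep: "\<not> lin_dep (set b)" and b: "set b \<subseteq> carrier_vec n"
    and hdb: "hd b = v" and len_b: "length b = n"
    by blast
  from hdb len_b n obtain vs where bv: "b = v # vs" by (cases b) auto
  define ws where "ws = gram_schmidt n b"
  from gram_schmidt_result[OF b dist_b indep ws_def]
  have ws: "set ws \<subseteq> carrier_vec n" "corthogonal ws" "length ws = n"
    by (auto simp: len_b)
  have "ws \<noteq> []" using ws(3) n by auto
  then have hdws: "ws ! 0 = v"
    using gram_schmidt_hd[OF v(1), of vs] unfolding ws_def bv by (simp add: hd_conv_nth)
  have wsi: "ws ! i \<in> carrier_vec n" if "i < n" for i using ws that by auto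
  have ws0: "ws ! i \<noteq> 0\<^sub>v n" if "i < n" for i
    using corthogonalD[OF ws(2), of i i] that ws(3) by auto
  define us where "us = map normalize_vec ws"
  have us: "length us = n" "set us \<subseteq> carrier_vec n" "\<And>i. i < n \<Longrightarrow> us ! i = normalize_vec (ws ! i)"
    using ws unfolding us_def by auto
  have "unitary n (mat_of_cols n us)"
  proof (rule unitary_mat_of_cols[OF us(1,2)])
    fix i j assume i: "i < n" and j: "j < n"
    show "us ! j \<bullet>c us ! i = (if i = j then 1 else 0)"
      using normalize_vec_norm[OF wsi ws0] normalize_vec_orthogonal[OF wsi wsi]
        corthogonalD[OF ws(2), of j i] i j us(3) ws(3) by auto
  qed
  moreover have "col (mat_of_cols n us) 0 = normalize_vec v"
    using us n hdws wsi[OF n] by (simp add: col_mat_of_cols)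
  ultimately show ?thesis by blast
qed

lemma eigenvector_exists:
  fixes A :: "complex mat"
  assumes A: "A \<in> carrier_mat n n" and n: "n > 0"
  shows "\<exists>e v. v \<in> carrier_vec n \<and> v \<noteq> 0\<^sub>v n \<and> A *\<^sub>v v = e \<cdot>\<^sub>v v"
  using spectrum_non_empty[OF A n] A unfolding spectrum_def eigenvalue_def eigenvector_def by auto

lemma col_unitary_conj_eigenvector:
  assumes A: "A \<in> carrier_mat n n" and W: "unitary n W" and n: "0 < n"
    and eig: "A *\<^sub>v col W 0 = e \<cdot>\<^sub>v col W 0"
  shows "col (adj W * A * W) 0 = e \<cdot>\<^sub>v unit_vec n 0"
proof -
  have Wc: "W \<in> carrier_mat n n" using W unitary_carrier by auto
  have "col (adj W * A * W) 0 = (adj W * A) *\<^sub>v col W 0"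
    by (rule col_mult2[of _ n n _ n]) (use Wc A n in auto)
  also have "\<dots> = adj W *\<^sub>v (A *\<^sub>v col W 0)"
    by (rule assoc_mult_mat_vec[of _ n n _ n]) (use Wc A in auto)
  also have "\<dots> = e \<cdot>\<^sub>v (adj W *\<^sub>v col W 0)"
    unfolding eig by (rule mult_mat_vec[of _ n n]) (use Wc in auto)
  also have "adj W *\<^sub>v col W 0 = col (adj W * W) 0"
    by (rule col_mult2[of _ n n _ n, symmetric]) (use Wc n in auto)
  also have "adj W * W = 1\<^sub>m n" using W unfolding unitary_def by simp
  finally show ?thesis using n by simp
qed

lemma hermitian_adj_conj:
  assumes "A \<in> carrier_mat n n" "W \<in> carrier_mat n n" "hermitian A"
  shows "hermitian (adj W * A * W)"
  using assms unfolding hermitian_def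
  by (simp add: adj_mult[of _ n n _ n] assoc_mult_mat[of _ n n _ n _ n] mult_carrier_mat[of _ n n _ n])

lemma hermitian_first_col_block:
  assumes B: "B \<in> carrier_mat (Suc m) (Suc m)" and hB: "hermitian B"
    and col0: "col B 0 = e \<cdot>\<^sub>v unit_vec (Suc m) 0"
  shows "\<exists>r B'. B' \<in> carrier_mat m m \<and> hermitian B' \<and>
    B = four_block_mat (diagm 1 (\<lambda>_. r)) (0\<^sub>m 1 m) (0\<^sub>m m 1) B'"
proof -
  have adjB: "adj B = B" using hB unfolding hermitian_def .
  have Bi0: "B $$ (i,0) = (if i = 0 then e else 0)" if "i < Suc m" for i
    using arg_cong[OF col0, of "\<lambda>x. x $ i"] B that by auto
  have B0j: "B $$ (0,j) = cnj (B $$ (j,0))" if "j < Suc m" for j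
    using arg_cong[OF adjB, of "\<lambda>X. X $$ (0,j)"] B that by simp
  have "cnj e = e" using B0j[of 0] Bi0[of 0] by simp
  then have "Im e = 0" by (simp add: Reals_cnj_iff[symmetric] complex_is_Real_iff)
  then have e: "e = complex_of_real (Re e)" by (simp add: complex_eq_iff)
  define B' where "B' = mat m m (\<lambda>(i,j). B $$ (Suc i, Suc j))"
  have B'c: "B' \<in> carrier_mat m m" unfolding B'_def by simp
  have "hermitian B'" unfolding hermitian_def
  proof (rule eq_matI)
    fix i j assume "i < dim_row B'" "j < dim_col B'"
    then have i: "i < m" and j: "j < m" using B'c by auto
    show "adj B' $$ (i,j) = B' $$ (i,j)"
      using arg_cong[OF adjB, of "\<lambda>X. X $$ (Suc i, Suc j)"] B i j unfolding B'_def by simp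
  qed (use B'c in auto)
  moreover have "B = four_block_mat (diagm 1 (\<lambda>_. Re e)) (0\<^sub>m 1 m) (0\<^sub>m m 1) B'"
  proof (rule eq_matI)
    fix i j assume "i < dim_row (four_block_mat (diagm 1 (\<lambda>_. Re e)) (0\<^sub>m 1 m) (0\<^sub>m m 1) B')"
      "j < dim_col (four_block_mat (diagm 1 (\<lambda>_. Re e)) (0\<^sub>m 1 m) (0\<^sub>m m 1) B')"
    then have i: "i < Suc m" and j: "j < Suc m" using B'c by auto
    show "B $$ (i,j) = four_block_mat (diagm 1 (\<lambda>_. Re e)) (0\<^sub>m 1 m) (0\<^sub>m m 1) B' $$ (i,j)"
      using i j B'c B0j[OF j] Bi0[OF i] Bi0[OF j] e unfolding B'_def diagm_def
      by (cases "i = 0"; cases "j = 0") auto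
  qed (use B B'c in auto)
  ultimately show ?thesis using B'c by blast
qed

lemma adj_four_block_one:
  assumes "U \<in> carrier_mat m m"
  shows "adj (four_block_mat (1\<^sub>m 1) (0\<^sub>m 1 m) (0\<^sub>m m 1) U) = four_block_mat (1\<^sub>m 1) (0\<^sub>m 1 m) (0\<^sub>m m 1) (adj U)"
  by (rule eq_matI) (use assms in auto)

lemma four_block_one_conj:
  assumes U: "U \<in> carrier_mat m m" and A: "A \<in> carrier_mat m m"
  defines "V \<equiv> four_block_mat (1\<^sub>m 1) (0\<^sub>m 1 m) (0\<^sub>m m 1) U"
  shows "adj V * four_block_mat (diagm 1 (\<lambda>_. r)) (0\<^sub>m 1 m) (0\<^sub>m m 1) A * V
    = four_block_mat (diagm 1 (\<lambda>_. r)) (0\<^sub>m 1 m) (0\<^sub>m m 1) (adj U * A * U)"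
proof -
  have left: "adj V * four_block_mat (diagm 1 (\<lambda>_. r)) (0\<^sub>m 1 m) (0\<^sub>m m 1) A
      = four_block_mat (diagm 1 (\<lambda>_. r)) (0\<^sub>m 1 m) (0\<^sub>m m 1) (adj U * A)"
    unfolding V_def adj_four_block_one[OF U]
    by (subst mult_four_block_mat[of _ 1 1 _ m _ m _ _ 1 _ m]) (use U A in auto)
  show ?thesis
    unfolding left unfolding V_def
    by (subst mult_four_block_mat[of _ 1 1 _ m _ m _ _ 1 _ m]) (use U A in auto)
qed

lemma unitary_four_block_one:
  assumes U: "unitary m U"
  shows "unitary (Suc m) (four_block_mat (1\<^sub>m 1) (0\<^sub>m 1 m) (0\<^sub>m m 1) U)"
proof -
  define V where "V = four_block_mat (1\<^sub>m 1) (0\<^sub>m 1 m) (0\<^sub>m m 1) U"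
  have Uc: "U \<in> carrier_mat m m" using U unitary_carrier by auto
  have Vc: "V \<in> carrier_mat (Suc m) (Suc m)" unfolding V_def using Uc by auto
  have "adj V * V = four_block_mat (1\<^sub>m 1) (0\<^sub>m 1 m) (0\<^sub>m m 1) (adj U * U)"
    unfolding V_def adj_four_block_one[OF Uc]
    by (subst mult_four_block_mat[of _ 1 1 _ m _ m _ _ 1 _ m]) (use Uc in auto)
  also have "\<dots> = 1\<^sub>m (Suc m)" using U four_block_one_mat[of 1 m] unfolding unitary_def by simp
  finally have left: "adj V * V = 1\<^sub>m (Suc m)" .
  have "V * adj V = 1\<^sub>m (Suc m)" by (rule mat_mult_left_right_inverse[OF _ _ left]) (use Vc in auto)
  then show ?thesis using Vc left unfolding unitary_def V_def by blast
qed

lemma hermitian_unitarily_diagonalizable: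
  assumes "A \<in> carrier_mat n n" "hermitian A"
  shows "\<exists>U lam. unitary n U \<and> adj U * A * U = diagm n lam"
  using assms
proof (induction n arbitrary: A)
  case 0
  then have "adj (1\<^sub>m 0) * A * 1\<^sub>m 0 = diagm 0 (\<lambda>_. 0)" by (intro eq_matI) auto
  then show ?case using unitary_one by blast
next
  case (Suc m)
  obtain e v where v: "v \<in> carrier_vec (Suc m)" "v \<noteq> 0\<^sub>v (Suc m)" and eig: "A *\<^sub>v v = e \<cdot>\<^sub>v v"
    using eigenvector_exists[OF Suc.prems(1)] by blast
  obtain W where W: "unitary (Suc m) W" and W0: "col W 0 = normalize_vec v"
    using unitary_completion[OF v] by blast
  have Wc: "W \<in> carrier_mat (Suc m) (Suc m)" using W unitary_carrier by auto
  have "A *\<^sub>v col W 0 = e \<cdot>\<^sub>v col W 0"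
    using Suc.prems(1) v eig unfolding W0 normalize_vec_def
    by (simp add: mult_mat_vec smult_smult_assoc mult.commute)
  then have "col (adj W * A * W) 0 = e \<cdot>\<^sub>v unit_vec (Suc m) 0"
    using col_unitary_conj_eigenvector[OF Suc.prems(1) W] by simp
  moreover have "adj W * A * W \<in> carrier_mat (Suc m) (Suc m)" using Wc Suc.prems(1) by auto
  ultimately obtain r A' where A': "A' \<in> carrier_mat m m" "hermitian A'"
    and block: "adj W * A * W = four_block_mat (diagm 1 (\<lambda>_. r)) (0\<^sub>m 1 m) (0\<^sub>m m 1) A'"
    using hermitian_first_col_block hermitian_adj_conj[OF Suc.prems(1) Wc Suc.prems(2)] by blast
  obtain U' lam' where U': "unitary m U'" and D': "adj U' * A' * U' = diagm m lam'"
    using Suc.IH[OF A'] by blast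
  define V where "V = four_block_mat (1\<^sub>m 1) (0\<^sub>m 1 m) (0\<^sub>m m 1) U'"
  have V: "unitary (Suc m) V" unfolding V_def by (rule unitary_four_block_one[OF U'])
  define lam where "lam i = (if i = 0 then r else lam' (i - 1))" for i
  have "adj V * (adj W * A * W) * V = four_block_mat (diagm 1 (\<lambda>_. r)) (0\<^sub>m 1 m) (0\<^sub>m m 1) (adj U' * A' * U')"
    unfolding block V_def by (rule four_block_one_conj[OF unitary_carrier[OF U'] A'(1)])
  also have "\<dots> = diagm (Suc m) lam"
    unfolding D' by (rule eq_matI) (auto simp: diagm_def lam_def)
  finally have "adj (W * V) * A * (W * V) = diagm (Suc m) lam"
    using Wc unitary_carrier[OF V] Suc.prems(1)
    by (simp add: adj_mult assoc_mult_mat[of _ "Suc m" "Suc m" _ "Suc m" _ "Suc m"] mult_carrier_mat[of _ "Suc m" "Suc m" _ "Suc m"])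
  then show ?case using unitary_mult[OF W V] by blast
qed

lemma hermitian_spectral_decomposition:
  assumes A: "A \<in> carrier_mat n n" and h: "hermitian A"
  shows "\<exists>U lam. unitary n U \<and> A = U * diagm n lam * adj U"
proof -
  obtain U lam where U: "unitary n U" and D: "adj U * A * U = diagm n lam"
    using hermitian_unitarily_diagonalizable[OF A h] by blast
  have Uc: "U \<in> carrier_mat n n" using U unitary_carrier by auto
  have "U * diagm n lam * adj U = (U * adj U) * A * (U * adj U)"
    unfolding D[symmetric] using Uc A by (simp add: assoc_mult_mat[of _ n n _ n _ n] mult_carrier_mat[of _ n n _ n])
  also have "\<dots> = A" using U A unfolding unitary_def by simp
  finally show ?thesis using U by metis
qed


section \<open>A rearrangement inequality for doubly stochastic matrices\<close>

lemma sum_mult_diff_last_nonneg: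
  fixes E a :: "nat \<Rightarrow> real"
  assumes mono: "\<And>i j. i \<le> j \<Longrightarrow> j < n \<Longrightarrow> E i \<le> E j"
    and partial: "\<And>k. k \<le> n \<Longrightarrow> (\<Sum>i<k. a i) \<le> 0"
  shows "(\<Sum>i<n. (E i - E (n - 1)) * a i) \<ge> 0"
  using assms
proof (induction n)
  case 0
  then show ?case by simp
next
  case (Suc m)
  show ?case
  proof (cases "m = 0")
    case True
    then show ?thesis by simp
  next
    case False
    have IH: "(\<Sum>i<m. (E i - E (m - 1)) * a i) \<ge> 0"
      using Suc.IH Suc.prems by auto
    have "(\<Sum>i<m. (E i - E m) * a i) = (\<Sum>i<m. (E i - E (m - 1)) * a i + (E (m - 1) - E m) * a i)"
      by (intro sum.cong) (auto simp: algebra_simps)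
    also have "\<dots> = (\<Sum>i<m. (E i - E (m - 1)) * a i) + (E (m - 1) - E m) * (\<Sum>i<m. a i)"
      by (simp only: sum.distrib sum_distrib_left)
    finally have split: "(\<Sum>i<m. (E i - E m) * a i) = \<dots>" .
    have "(E (m - 1) - E m) * (\<Sum>i<m. a i) \<ge> 0"
      using Suc.prems(1)[of "m - 1" m] Suc.prems(2)[of m] False
      by (intro mult_nonpos_nonpos) auto
    then show ?thesis using IH split by simp
  qed
qed

lemma sum_mult_nonneg_if_partial_sums_nonpos:
  fixes E a :: "nat \<Rightarrow> real"
  assumes mono: "\<And>i j. i \<le> j \<Longrightarrow> j < n \<Longrightarrow> E i \<le> E j"
    and partial: "\<And>k. k \<le> n \<Longrightarrow> (\<Sum>i<k. a i) \<le> 0"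
    and total: "(\<Sum>i<n. a i) = 0"
  shows "(\<Sum>i<n. E i * a i) \<ge> 0"
proof -
  have "(\<Sum>i<n. E i * a i) = (\<Sum>i<n. (E i - E (n - 1)) * a i + E (n - 1) * a i)"
    by (intro sum.cong) (auto simp: algebra_simps)
  also have "\<dots> = (\<Sum>i<n. (E i - E (n - 1)) * a i) + E (n - 1) * (\<Sum>i<n. a i)"
    by (simp only: sum.distrib sum_distrib_left)
  finally show ?thesis using sum_mult_diff_last_nonneg[OF mono partial] total by simp
qed

lemma sum_weighted_le_sum_prefix:
  fixes mu c :: "nat \<Rightarrow> real"
  assumes dec: "\<And>i j. i \<le> j \<Longrightarrow> j < n \<Longrightarrow> mu j \<le> mu i"
    and c: "\<And>j. j < n \<Longrightarrow> 0 \<le> c j \<and> c j \<le> 1"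
    and total: "(\<Sum>j<n. c j) = real k" and kn: "k \<le> n"
  shows "(\<Sum>j<n. c j * mu j) \<le> (\<Sum>j<k. mu j)"
proof (cases "k = 0")
  case True
  then have "\<forall>j\<in>{..<n}. c j = 0" using total c by (subst sum_nonneg_eq_0_iff[symmetric]) auto
  then show ?thesis using True by simp
next
  case False
  define t where "t = mu (k - 1)"
  have "(\<Sum>j<n. c j * mu j) = (\<Sum>j<n. c j * (mu j - t)) + real k * t"
    using total by (simp add: algebra_simps sum_subtractf sum_distrib_left[symmetric])
  also have "(\<Sum>j<n. c j * (mu j - t)) \<le> (\<Sum>j<n. if j < k then mu j - t else 0)"
  proof (rule sum_mono)
    fix j assume j: "j \<in> {..<n}"
    show "c j * (mu j - t) \<le> (if j < k then mu j - t else 0)"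
    proof (cases "j < k")
      case True
      then have "mu j - t \<ge> 0" using dec[of j "k - 1"] kn False unfolding t_def by auto
      then show ?thesis using True c[of j] j by (simp add: mult_left_le_one_le)
    next
      case out: False
      then have "mu j - t \<le> 0" using dec[of "k - 1" j] kn False j unfolding t_def by auto
      then show ?thesis using out c[of j] j by (simp add: mult_nonneg_nonpos)
    qed
  qed
  also have "(\<Sum>j<n. if j < k then mu j - t else 0) = (\<Sum>j<k. mu j - t)"
  proof -
    have "(\<Sum>j<n. if j < k then mu j - t else 0) = (\<Sum>j\<in>{..<n} \<inter> {j. j < k}. mu j - t)"
      by (simp add: sum.inter_restrict)
    also have "{..<n} \<inter> {j. j < k} = {..<k}" using kn by auto
    finally show ?thesis .
  qed
  finally show ?thesis by (simp add: sum_subtractf)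
qed

definition doubly_stochastic :: "nat \<Rightarrow> (nat \<Rightarrow> nat \<Rightarrow> real) \<Rightarrow> bool" where
  "doubly_stochastic d M \<longleftrightarrow> (\<forall>i<d. \<forall>j<d. 0 \<le> M i j) \<and>
     (\<forall>i<d. (\<Sum>j<d. M i j) = 1) \<and> (\<forall>j<d. (\<Sum>i<d. M i j) = 1)"

lemma doubly_stochastic_sorted_le:
  fixes M :: "nat \<Rightarrow> nat \<Rightarrow> real" and mu En :: "nat \<Rightarrow> real"
  assumes mono: "\<And>i j. i \<le> j \<Longrightarrow> j < d \<Longrightarrow> En i \<le> En j"
    and dec: "\<And>i j. i \<le> j \<Longrightarrow> j < d \<Longrightarrow> mu j \<le> mu i"
    and M: "doubly_stochastic d M"
  shows "(\<Sum>i<d. En i * mu i) \<le> (\<Sum>i<d. En i * (\<Sum>j<d. M i j * mu j))"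
proof -
  define a where "a i = (\<Sum>j<d. M i j * mu j) - mu i" for i
  have swap: "(\<Sum>i<k. (\<Sum>j<d. M i j * mu j)) = (\<Sum>j<d. (\<Sum>i<k. M i j) * mu j)" for k
    by (simp add: sum.swap[of _ "{..<k}"] sum_distrib_right)
  have "(\<Sum>i<k. a i) \<le> 0" if k: "k \<le> d" for k
  proof -
    have weights: "0 \<le> (\<Sum>i<k. M i j) \<and> (\<Sum>i<k. M i j) \<le> 1" if j: "j < d" for j
    proof
      show "0 \<le> (\<Sum>i<k. M i j)" using M j k unfolding doubly_stochastic_def by (intro sum_nonneg) auto
      have "(\<Sum>i<k. M i j) \<le> (\<Sum>i<d. M i j)"
        using M j k unfolding doubly_stochastic_def by (intro sum_mono2) auto
      then show "(\<Sum>i<k. M i j) \<le> 1" using M j unfolding doubly_stochastic_def by simp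
    qed
    have total: "(\<Sum>j<d. (\<Sum>i<k. M i j)) = real k"
    proof -
      have "(\<Sum>j<d. (\<Sum>i<k. M i j)) = (\<Sum>i<k. (\<Sum>j<d. M i j))" by (rule sum.swap)
      also have "\<dots> = (\<Sum>i<k. 1)" using M k unfolding doubly_stochastic_def by (intro sum.cong) auto
      finally show ?thesis by simp
    qed
    have "(\<Sum>j<d. (\<Sum>i<k. M i j) * mu j) \<le> (\<Sum>j<k. mu j)"
      by (rule sum_weighted_le_sum_prefix[OF dec weights total k])
    then show ?thesis unfolding a_def by (simp add: sum_subtractf swap)
  qed
  moreover have "(\<Sum>i<d. a i) = 0"
    using M unfolding a_def doubly_stochastic_def by (simp add: sum_subtractf swap)
  ultimately have "(\<Sum>i<d. En i * a i) \<ge> 0"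
    by (intro sum_mult_nonneg_if_partial_sums_nonpos[OF mono]) auto
  then show ?thesis unfolding a_def by (simp add: algebra_simps sum_subtractf)
qed

lemma doubly_stochastic_permute_cols:
  assumes M: "doubly_stochastic d M" and \<pi>: "\<pi> permutes {..<d}"
  shows "doubly_stochastic d (\<lambda>i j. M i (\<pi> j))"
proof -
  have "(\<Sum>j<d. M i (\<pi> j)) = (\<Sum>j<d. M i j)" for i
    using sum.permute[OF \<pi>, of "M i"] by simp
  moreover have "\<pi> j < d" if "j < d" for j using permutes_in_image[OF \<pi>] that by simp
  ultimately show ?thesis using M unfolding doubly_stochastic_def by simp
qed

lemma sum_diff_two_points:
  fixes g h :: "nat \<Rightarrow> real"
  assumes "i < d" "j < d" "i \<noteq> j" "\<And>l. l \<noteq> i \<Longrightarrow> l \<noteq> j \<Longrightarrow> h l = g l"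
  shows "(\<Sum>l<d. h l) - (\<Sum>l<d. g l) = (h i - g i) + (h j - g j)"
proof -
  have "(\<Sum>l<d. h l) - (\<Sum>l<d. g l) = (\<Sum>l<d. h l - g l)" by (simp add: sum_subtractf)
  also have "\<dots> = (\<Sum>l\<in>{i,j}. h l - g l)"
    using assms by (intro sum.mono_neutral_right) auto
  also have "\<dots> = (h i - g i) + (h j - g j)" using assms by simp
  finally show ?thesis .
qed

text \<open>A permutation minimizing \<open>\<Sum>i. i * mu (\<pi> i)\<close> sorts \<open>mu\<close> decreasingly, since otherwise a
  transposition would decrease the sum.\<close>

lemma permutation_sorting_decreasing:
  fixes mu :: "nat \<Rightarrow> real"
  obtains \<pi> where "\<pi> permutes {..<d}" "\<And>i j. i \<le> j \<Longrightarrow> j < d \<Longrightarrow> mu (\<pi> j) \<le> mu (\<pi> i)"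
proof -
  define f where "f \<pi> = (\<Sum>i<d. real i * mu (\<pi> i))" for \<pi> :: "nat \<Rightarrow> nat"
  define S where "S = {\<pi>. \<pi> permutes {..<d}}"
  have "finite S" unfolding S_def by (rule finite_permutations) simp
  moreover have "S \<noteq> {}" unfolding S_def using permutes_id by blast
  ultimately obtain \<pi> where perm: "\<pi> permutes {..<d}" and min: "\<And>\<sigma>. \<sigma> \<in> S \<Longrightarrow> f \<pi> \<le> f \<sigma>"
    using arg_min_if_finite[of S f] unfolding S_def by (auto simp: not_less)
  have sorted: "mu (\<pi> j) \<le> mu (\<pi> i)" if ij: "i \<le> j" "j < d" for i j
  proof (rule ccontr)
    assume lt: "\<not> ?thesis"
    then have ne: "i < j" using ij by (cases "i = j") auto
    define \<sigma> where "\<sigma> = \<pi> \<circ> Transposition.transpose i j"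
    have "\<sigma> \<in> S" unfolding S_def \<sigma>_def
      using perm ij by (auto intro!: permutes_compose permutes_swap_id)
    then have "f \<pi> \<le> f \<sigma>" by (rule min)
    moreover have "f \<sigma> - f \<pi> = (real i - real j) * (mu (\<pi> j) - mu (\<pi> i))"
    proof -
      have "f \<sigma> - f \<pi> = (real i * mu (\<sigma> i) - real i * mu (\<pi> i)) + (real j * mu (\<sigma> j) - real j * mu (\<pi> j))"
        unfolding f_def by (rule sum_diff_two_points) (use ij ne in \<open>auto simp: \<sigma>_def\<close>)
      then show ?thesis by (simp add: \<sigma>_def algebra_simps)
    qed
    moreover have "(real i - real j) * (mu (\<pi> j) - mu (\<pi> i)) < 0"
      using lt ne by (intro mult_neg_pos) auto
    ultimately show False by simp
  qed
  show thesis using that[OF perm sorted] .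
qed

lemma doubly_stochastic_perm_le:
  fixes M :: "nat \<Rightarrow> nat \<Rightarrow> real" and mu En :: "nat \<Rightarrow> real"
  assumes mono: "\<And>i j. i \<le> j \<Longrightarrow> j < d \<Longrightarrow> En i \<le> En j"
    and M: "doubly_stochastic d M"
  shows "\<exists>\<pi>. \<pi> permutes {..<d} \<and>
     (\<Sum>i<d. En i * mu (\<pi> i)) \<le> (\<Sum>i<d. En i * (\<Sum>j<d. M i j * mu j))"
proof -
  obtain \<pi> where \<pi>: "\<pi> permutes {..<d}" and dec: "\<And>i j. i \<le> j \<Longrightarrow> j < d \<Longrightarrow> mu (\<pi> j) \<le> mu (\<pi> i)"
    using permutation_sorting_decreasing[of d mu] by metis
  have "(\<Sum>j<d. M i j * mu j) = (\<Sum>j<d. M i (\<pi> j) * mu (\<pi> j))" for i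
    using sum.permute[OF \<pi>, of "\<lambda>j. M i j * mu j"] by simp
  moreover have "(\<Sum>i<d. En i * mu (\<pi> i)) \<le> (\<Sum>i<d. En i * (\<Sum>j<d. M i (\<pi> j) * mu (\<pi> j)))"
    by (rule doubly_stochastic_sorted_le[OF mono dec doubly_stochastic_permute_cols[OF M \<pi>]])
  ultimately show ?thesis using \<pi> by auto
qed


section \<open>Kraus maps\<close>

definition sum_mat_list :: "nat \<Rightarrow> (complex mat \<Rightarrow> complex mat) \<Rightarrow> complex mat list \<Rightarrow> complex mat" where
  "sum_mat_list d f Ks = foldr (\<lambda>K acc. f K + acc) Ks (0\<^sub>m d d)"

definition kraus_apply :: "nat \<Rightarrow> complex mat list \<Rightarrow> complex mat \<Rightarrow> complex mat" where
  "kraus_apply d Ks X = sum_mat_list d (\<lambda>K. K * X * adj K) Ks"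

definition unital_kraus :: "nat \<Rightarrow> complex mat list \<Rightarrow> bool" where
  "unital_kraus d Ks \<longleftrightarrow> (\<forall>K\<in>set Ks. K \<in> carrier_mat d d) \<and>
     sum_mat_list d (\<lambda>K. adj K * K) Ks = 1\<^sub>m d \<and> sum_mat_list d (\<lambda>K. K * adj K) Ks = 1\<^sub>m d"

lemma sum_mat_list_carrier:
  assumes "\<And>K. K \<in> set Ks \<Longrightarrow> f K \<in> carrier_mat d d"
  shows "sum_mat_list d f Ks \<in> carrier_mat d d"
  using assms unfolding sum_mat_list_def by (induction Ks) auto

lemma index_sum_mat_list:
  assumes "\<And>K. K \<in> set Ks \<Longrightarrow> f K \<in> carrier_mat d d" and "i < d" "j < d"
  shows "sum_mat_list d f Ks $$ (i,j) = (\<Sum>k<length Ks. f (Ks ! k) $$ (i,j))"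
  using assms
proof (induction Ks)
  case Nil
  then show ?case by (simp add: sum_mat_list_def)
next
  case (Cons K Ks)
  have "sum_mat_list d f Ks \<in> carrier_mat d d" "f K \<in> carrier_mat d d"
    using Cons.prems by (auto intro: sum_mat_list_carrier)
  then show ?case
    using Cons by (simp add: sum_mat_list_def sum.lessThan_Suc_shift del: sum.lessThan_Suc)
qed

lemma sum_mat_list_cong:
  "(\<And>K. K \<in> set Ks \<Longrightarrow> f K = g K) \<Longrightarrow> sum_mat_list d f Ks = sum_mat_list d g Ks"
  unfolding sum_mat_list_def by (induction Ks) auto

lemma sum_mat_list_map: "sum_mat_list d f (map h Ks) = sum_mat_list d (\<lambda>K. f (h K)) Ks"
  unfolding sum_mat_list_def by (induction Ks) auto

lemma sum_mat_list_sandwich: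
  assumes g: "\<And>K. K \<in> set Ks \<Longrightarrow> g K \<in> carrier_mat d d"
    and X: "X \<in> carrier_mat d d" and Y: "Y \<in> carrier_mat d d"
  shows "sum_mat_list d (\<lambda>K. X * g K * Y) Ks = X * sum_mat_list d g Ks * Y"
  using g
proof (induction Ks)
  case Nil
  then show ?case using X Y by (simp add: sum_mat_list_def)
next
  case (Cons K Ks)
  have "sum_mat_list d g Ks \<in> carrier_mat d d" "g K \<in> carrier_mat d d"
    using Cons.prems by (auto intro: sum_mat_list_carrier)
  then have "X * (g K + sum_mat_list d g Ks) * Y = X * g K * Y + X * sum_mat_list d g Ks * Y"
    using X Y by (simp add: mult_add_distrib_mat add_mult_distrib_mat[of _ d d])
  then show ?case using Cons by (simp add: sum_mat_list_def)
qed

lemma adj_add: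
  assumes "A \<in> carrier_mat n m" "B \<in> carrier_mat n m"
  shows "adj (A + B) = adj A + adj B"
  by (rule eq_matI) (use assms in auto)

lemma adj_sum_mat_list:
  assumes "\<And>K. K \<in> set Ks \<Longrightarrow> f K \<in> carrier_mat d d"
  shows "adj (sum_mat_list d f Ks) = sum_mat_list d (\<lambda>K. adj (f K)) Ks"
  using assms
proof (induction Ks)
  case Nil
  then show ?case by (auto simp: sum_mat_list_def intro: eq_matI)
next
  case (Cons K Ks)
  have "sum_mat_list d f Ks \<in> carrier_mat d d" "f K \<in> carrier_mat d d"
    using Cons.prems by (auto intro: sum_mat_list_carrier)
  then show ?case using Cons by (simp add: sum_mat_list_def adj_add[of _ d d])
qed

lemma sandwich_carrier: "A \<in> carrier_mat d d \<Longrightarrow> X \<in> carrier_mat d d \<Longrightarrow> A * X * adj A \<in> carrier_mat d d"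
  by auto

lemma kraus_apply_carrier:
  assumes "\<forall>K\<in>set Ks. K \<in> carrier_mat d d" "X \<in> carrier_mat d d"
  shows "kraus_apply d Ks X \<in> carrier_mat d d"
  unfolding kraus_apply_def by (rule sum_mat_list_carrier) (use assms in \<open>auto intro: sandwich_carrier\<close>)

lemma hermitian_kraus_apply:
  assumes Ks: "\<forall>K\<in>set Ks. K \<in> carrier_mat d d" and X: "X \<in> carrier_mat d d" "hermitian X"
  shows "hermitian (kraus_apply d Ks X)"
proof -
  have "adj (K * X * adj K) = K * X * adj K" if "K \<in> set Ks" for K
    using Ks that X unfolding hermitian_def by (simp add: adj_mult[of _ d d _ d] mult_carrier_mat[of _ d d _ d] assoc_mult_mat[of _ d d _ d _ d])
  then show ?thesis
    using Ks X unfolding hermitian_def kraus_apply_def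
    by (subst adj_sum_mat_list) (auto intro: sum_mat_list_cong sandwich_carrier)
qed

lemma kraus_apply_map_mult:
  assumes Ks: "\<forall>K\<in>set Ks. K \<in> carrier_mat d d"
    and V: "V \<in> carrier_mat d d" and W: "W \<in> carrier_mat d d" and X: "X \<in> carrier_mat d d"
  shows "kraus_apply d (map (\<lambda>K. V * K * W) Ks) X = V * kraus_apply d Ks (W * X * adj W) * adj V"
proof -
  have "(V * K * W) * X * adj (V * K * W) = V * (K * (W * X * adj W) * adj K) * adj V"
    if "K \<in> set Ks" for K
  proof -
    have K: "K \<in> carrier_mat d d" using Ks that by auto
    have "(V * K * W) * X * adj (V * K * W) = V * ((K * W) * X * adj (K * W)) * adj V"
      using sandwich_mult[of V d "K * W" X] K V W X by (simp add: assoc_mult_mat[of _ d d _ d _ d])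
    then show ?thesis using sandwich_mult[OF K W X] by simp
  qed
  then have "kraus_apply d (map (\<lambda>K. V * K * W) Ks) X
      = sum_mat_list d (\<lambda>K. V * (K * (W * X * adj W) * adj K) * adj V) Ks"
    unfolding kraus_apply_def sum_mat_list_map by (rule sum_mat_list_cong)
  also have "\<dots> = V * kraus_apply d Ks (W * X * adj W) * adj V"
    unfolding kraus_apply_def by (rule sum_mat_list_sandwich) (use Ks V W X in \<open>auto intro!: sandwich_carrier\<close>)
  finally show ?thesis .
qed

lemma unital_kraus_map_mult:
  assumes Ks: "unital_kraus d Ks" and V: "unitary d V" and W: "unitary d W"
  shows "unital_kraus d (map (\<lambda>K. V * K * W) Ks)"
proof -
  have Kc: "\<forall>K\<in>set Ks. K \<in> carrier_mat d d" using Ks unfolding unital_kraus_def by auto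
  have Vc: "V \<in> carrier_mat d d" and Wc: "W \<in> carrier_mat d d"
    using V W unitary_carrier by auto
  have "adj (V * K * W) * (V * K * W) = adj W * (adj K * K) * W" if "K \<in> set Ks" for K
  proof -
    have "adj (V * K * W) * (V * K * W) = adj W * (adj K * (adj V * V) * K) * W"
      using Kc that Vc Wc by (simp add: adj_mult[of _ d d _ d] mult_carrier_mat[of _ d d _ d] assoc_mult_mat[of _ d d _ d _ d])
    moreover have "adj K * 1\<^sub>m d = adj K" using Kc that right_mult_one_mat[of "adj K" d d] by auto
    ultimately show ?thesis using V unfolding unitary_def by simp
  qed
  then have "sum_mat_list d (\<lambda>A. adj A * A) (map (\<lambda>K. V * K * W) Ks)
      = adj W * sum_mat_list d (\<lambda>K. adj K * K) Ks * W"
    unfolding sum_mat_list_map using Kc Wc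
    by (subst sum_mat_list_sandwich[symmetric]) (auto intro: sum_mat_list_cong intro!: mult_carrier_mat)
  also have "\<dots> = 1\<^sub>m d" using Ks W Wc unfolding unital_kraus_def unitary_def by simp
  finally have left: "sum_mat_list d (\<lambda>A. adj A * A) (map (\<lambda>K. V * K * W) Ks) = 1\<^sub>m d" .
  have "(V * K * W) * adj (V * K * W) = V * (K * adj K) * adj V" if "K \<in> set Ks" for K
  proof -
    have "(V * K * W) * adj (V * K * W) = V * (K * (W * adj W) * adj K) * adj V"
      using Kc that Vc Wc by (simp add: adj_mult[of _ d d _ d] mult_carrier_mat[of _ d d _ d] assoc_mult_mat[of _ d d _ d _ d])
    moreover have "K * 1\<^sub>m d = K" using Kc that right_mult_one_mat[of K d d] by auto
    ultimately show ?thesis using W unfolding unitary_def by simp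
  qed
  then have "sum_mat_list d (\<lambda>A. A * adj A) (map (\<lambda>K. V * K * W) Ks)
      = V * sum_mat_list d (\<lambda>K. K * adj K) Ks * adj V"
    unfolding sum_mat_list_map using Kc Vc
    by (subst sum_mat_list_sandwich[symmetric]) (auto intro: sum_mat_list_cong intro!: mult_carrier_mat)
  also have "\<dots> = 1\<^sub>m d" using Ks V Vc unfolding unital_kraus_def unitary_def by simp
  finally show ?thesis using left Kc Vc Wc unfolding unital_kraus_def by auto
qed


definition kraus_weight :: "complex mat list \<Rightarrow> nat \<Rightarrow> nat \<Rightarrow> real" where
  "kraus_weight Ks i j = (\<Sum>k<length Ks. (cmod (Ks ! k $$ (i,j)))\<^sup>2)"

lemma diag_kraus_apply_diagm:
  assumes Ks: "\<forall>K\<in>set Ks. K \<in> carrier_mat d d" and i: "i < d"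
  shows "kraus_apply d Ks (diagm d lam) $$ (i,i) = complex_of_real (\<Sum>j<d. kraus_weight Ks i j * lam j)"
proof -
  have Kk: "Ks ! k \<in> carrier_mat d d" if "k < length Ks" for k using Ks that by auto
  have "kraus_apply d Ks (diagm d lam) $$ (i,i) = (\<Sum>k<length Ks. (Ks ! k * diagm d lam * adj (Ks ! k)) $$ (i,i))"
    unfolding kraus_apply_def by (rule index_sum_mat_list) (use Ks i in \<open>auto intro: sandwich_carrier\<close>)
  also have "\<dots> = (\<Sum>k<length Ks. complex_of_real (\<Sum>j<d. (cmod (Ks ! k $$ (i,j)))\<^sup>2 * lam j))"
    by (intro sum.cong refl) (simp add: diag_sandwich_diagm[OF Kk i])
  also have "\<dots> = complex_of_real (\<Sum>k<length Ks. \<Sum>j<d. (cmod (Ks ! k $$ (i,j)))\<^sup>2 * lam j)"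
    by (simp only: of_real_sum)
  also have "(\<Sum>k<length Ks. \<Sum>j<d. (cmod (Ks ! k $$ (i,j)))\<^sup>2 * lam j) = (\<Sum>j<d. kraus_weight Ks i j * lam j)"
    unfolding kraus_weight_def by (simp add: sum_distrib_right sum.swap[of _ "{..<length Ks}"])
  finally show ?thesis .
qed

lemma kraus_weight_row_sum:
  assumes Ks: "\<forall>K\<in>set Ks. K \<in> carrier_mat d d" and i: "i < d"
  shows "complex_of_real (\<Sum>j<d. kraus_weight Ks i j) = sum_mat_list d (\<lambda>K. K * adj K) Ks $$ (i,i)"
proof -
  have Kk: "Ks ! k \<in> carrier_mat d d" if "k < length Ks" for k using Ks that by auto
  have "sum_mat_list d (\<lambda>K. K * adj K) Ks $$ (i,i) = (\<Sum>k<length Ks. (Ks ! k * adj (Ks ! k)) $$ (i,i))"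
    by (rule index_sum_mat_list) (use Ks i in auto)
  also have "\<dots> = (\<Sum>k<length Ks. complex_of_real (\<Sum>j<d. (cmod (Ks ! k $$ (i,j)))\<^sup>2))"
    by (intro sum.cong refl) (simp add: diag_mult_adj[OF Kk i])
  also have "\<dots> = complex_of_real (\<Sum>k<length Ks. \<Sum>j<d. (cmod (Ks ! k $$ (i,j)))\<^sup>2)"
    by (simp only: of_real_sum)
  finally show ?thesis unfolding kraus_weight_def by (simp add: sum.swap[of _ "{..<length Ks}"])
qed

lemma kraus_weight_col_sum:
  assumes Ks: "\<forall>K\<in>set Ks. K \<in> carrier_mat d d" and j: "j < d"
  shows "complex_of_real (\<Sum>i<d. kraus_weight Ks i j) = sum_mat_list d (\<lambda>K. adj K * K) Ks $$ (j,j)"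
proof -
  have Kk: "Ks ! k \<in> carrier_mat d d" if "k < length Ks" for k using Ks that by auto
  have "sum_mat_list d (\<lambda>K. adj K * K) Ks $$ (j,j) = (\<Sum>k<length Ks. (adj (Ks ! k) * Ks ! k) $$ (j,j))"
    by (rule index_sum_mat_list) (use Ks j in \<open>auto intro!: mult_carrier_mat\<close>)
  also have "\<dots> = (\<Sum>k<length Ks. complex_of_real (\<Sum>i<d. (cmod (Ks ! k $$ (i,j)))\<^sup>2))"
    by (intro sum.cong refl) (simp add: diag_adj_mult[OF Kk j])
  also have "\<dots> = complex_of_real (\<Sum>k<length Ks. \<Sum>i<d. (cmod (Ks ! k $$ (i,j)))\<^sup>2)"
    by (simp only: of_real_sum)
  finally show ?thesis unfolding kraus_weight_def by (simp add: sum.swap[of _ "{..<length Ks}"])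
qed

lemma unital_kraus_weight_doubly_stochastic:
  assumes "unital_kraus d Ks"
  shows "doubly_stochastic d (kraus_weight Ks)"
proof -
  have Ks: "\<forall>K\<in>set Ks. K \<in> carrier_mat d d" using assms unfolding unital_kraus_def by auto
  have "complex_of_real (\<Sum>j<d. kraus_weight Ks i j) = 1" if "i < d" for i
    using kraus_weight_row_sum[OF Ks that] assms that unfolding unital_kraus_def by simp
  moreover have "complex_of_real (\<Sum>i<d. kraus_weight Ks i j) = 1" if "j < d" for j
    using kraus_weight_col_sum[OF Ks that] assms that unfolding unital_kraus_def by simp
  ultimately have "(\<Sum>j<d. kraus_weight Ks i j) = 1" "(\<Sum>i<d. kraus_weight Ks i j) = 1"
    if "i < d" "j < d" for i j
    using that by (simp_all only: of_real_eq_1_iff)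
  then show ?thesis
    unfolding doubly_stochastic_def kraus_weight_def by (auto intro: sum_nonneg)
qed

lemma energy_kraus_apply_diagm:
  assumes "\<forall>K\<in>set Ks. K \<in> carrier_mat d d"
  shows "energy d En (kraus_apply d Ks (diagm d lam)) = (\<Sum>i<d. En i * (\<Sum>j<d. kraus_weight Ks i j * lam j))"
  using assms by (simp add: energy_eq_sum kraus_apply_carrier diag_kraus_apply_diagm)

definition perm_mat :: "nat \<Rightarrow> (nat \<Rightarrow> nat) \<Rightarrow> complex mat" where
  "perm_mat d \<pi> = mat d d (\<lambda>(i,j). if j = \<pi> i then 1 else 0)"

lemma unitary_perm_mat:
  assumes \<pi>: "\<pi> permutes {..<d}"
  shows "unitary d (perm_mat d \<pi>)"
proof -
  define P where "P = perm_mat d \<pi>"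
  have P: "P \<in> carrier_mat d d" unfolding P_def perm_mat_def by simp
  have \<pi>d: "\<pi> j < d" if "j < d" for j using permutes_in_image[OF \<pi>, of j] that by simp
  have inj: "\<pi> i = \<pi> k \<longleftrightarrow> i = k" for i k using permutes_inj[OF \<pi>] by (auto dest: injD)
  have right: "P * adj P = 1\<^sub>m d"
  proof (rule eq_matI)
    fix i k assume "i < dim_row (1\<^sub>m d)" "k < dim_col (1\<^sub>m d)"
    then have i: "i < d" and k: "k < d" by auto
    have "(P * adj P) $$ (i,k) = (\<Sum>j\<in>{0..<d}. (if j = \<pi> i then 1 else 0) * cnj (if j = \<pi> k then 1 else 0))"
      using P i k by (simp add: scalar_prod_def P_def perm_mat_def)
    also have "\<dots> = (\<Sum>j\<in>{0..<d}. if j = \<pi> i then (if \<pi> i = \<pi> k then 1 else 0) else 0)"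
      by (intro sum.cong) auto
    also have "\<dots> = (if \<pi> i = \<pi> k then 1 else 0)" using \<pi>d[OF i] by (simp add: sum.delta')
    finally show "(P * adj P) $$ (i,k) = 1\<^sub>m d $$ (i,k)" using i k inj by simp
  qed (use P in auto)
  have "adj P * P = 1\<^sub>m d" by (rule mat_mult_left_right_inverse[OF _ _ right]) (use P in auto)
  then show ?thesis unfolding unitary_def P_def[symmetric] using P right by auto
qed

lemma energy_perm_mat_sandwich:
  assumes \<pi>: "\<pi> permutes {..<d}"
  shows "energy d En (perm_mat d \<pi> * diagm d lam * adj (perm_mat d \<pi>)) = (\<Sum>i<d. En i * lam (\<pi> i))"
proof -
  have "perm_mat d \<pi> \<in> carrier_mat d d" unfolding perm_mat_def by simp
  moreover have "(\<Sum>j<d. (cmod (perm_mat d \<pi> $$ (i,j)))\<^sup>2 * lam j) = lam (\<pi> i)" if i: "i < d" for i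
  proof -
    have "(\<Sum>j<d. (cmod (perm_mat d \<pi> $$ (i,j)))\<^sup>2 * lam j) = (\<Sum>j<d. if j = \<pi> i then lam j else 0)"
      using i by (intro sum.cong) (auto simp: perm_mat_def)
    also have "\<dots> = lam (\<pi> i)" using permutes_in_image[OF \<pi>, of i] i by (simp add: sum.delta')
    finally show ?thesis .
  qed
  ultimately show ?thesis by (simp add: energy_sandwich_diagm)
qed

lemma energy_perm_le_kraus_apply_diagm:
  assumes Ks: "unital_kraus d Ks" and mono: "mono_on {..<d} En"
  shows "\<exists>\<pi>. \<pi> permutes {..<d} \<and>
    energy d En (perm_mat d \<pi> * diagm d lam * adj (perm_mat d \<pi>)) \<le> energy d En (kraus_apply d Ks (diagm d lam))"
proof -
  have mono: "En i \<le> En j" if "i \<le> j" "j < d" for i j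
    using mono_onD[OF mono, of i j] that by simp
  from doubly_stochastic_perm_le[where En = En and mu = lam, OF mono unital_kraus_weight_doubly_stochastic[OF Ks]]
  obtain \<pi> where \<pi>: "\<pi> permutes {..<d}"
    and le: "(\<Sum>i<d. En i * lam (\<pi> i)) \<le> (\<Sum>i<d. En i * (\<Sum>j<d. kraus_weight Ks i j * lam j))"
    by auto
  have "\<forall>K\<in>set Ks. K \<in> carrier_mat d d" using Ks unfolding unital_kraus_def by auto
  then show ?thesis
    using \<pi> le by (auto simp: energy_kraus_apply_diagm energy_perm_mat_sandwich)
qed


section \<open>Passive energy and ergotropy\<close>

definition passive_energy :: "nat \<Rightarrow> (nat \<Rightarrow> real) \<Rightarrow> complex mat \<Rightarrow> real" where
  "passive_energy d En \<rho> = (INF U \<in> {U. unitary d U}. energy d En (U * \<rho> * adj U))"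

lemma ergotropy_eq: "ergotropy d En \<rho> = energy d En \<rho> - passive_energy d En \<rho>"
  unfolding ergotropy_def passive_energy_def ..

lemma energy_unitary_sandwich_diagm_lower_bound:
  assumes X: "unitary d X"
  shows "- (\<Sum>i<d. \<Sum>j<d. \<bar>En i\<bar> * \<bar>lam j\<bar>) \<le> energy d En (X * diagm d lam * adj X)"
proof -
  have "- (\<bar>En i\<bar> * \<bar>lam j\<bar>) \<le> En i * ((cmod (X $$ (i,j)))\<^sup>2 * lam j)" if "i < d" "j < d" for i j
  proof -
    have "(cmod (X $$ (i,j)))\<^sup>2 \<le> (\<Sum>j<d. (cmod (X $$ (i,j)))\<^sup>2)"
      using that by (intro member_le_sum) auto
    then have "(cmod (X $$ (i,j)))\<^sup>2 * \<bar>lam j\<bar> \<le> \<bar>lam j\<bar>"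
      using unitary_row_norm[OF X that(1)] by (intro mult_left_le_one_le) auto
    then have "\<bar>En i * ((cmod (X $$ (i,j)))\<^sup>2 * lam j)\<bar> \<le> \<bar>En i\<bar> * \<bar>lam j\<bar>"
      by (simp add: abs_mult mult_left_mono)
    then show ?thesis by linarith
  qed
  then have "- (\<Sum>i<d. \<Sum>j<d. \<bar>En i\<bar> * \<bar>lam j\<bar>) \<le> (\<Sum>i<d. \<Sum>j<d. En i * ((cmod (X $$ (i,j)))\<^sup>2 * lam j))"
    unfolding sum_negf[symmetric] by (intro sum_mono) auto
  then show ?thesis
    using unitary_carrier[OF X] by (simp add: energy_sandwich_diagm sum_distrib_left)
qed

lemma bdd_below_energy_unitary_orbit:
  assumes A: "A \<in> carrier_mat d d" and h: "hermitian A"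
  shows "bdd_below ((\<lambda>U. energy d En (U * A * adj U)) ` {U. unitary d U})"
proof -
  obtain W lam where W: "unitary d W" and AW: "A = W * diagm d lam * adj W"
    using hermitian_spectral_decomposition[OF A h] by blast
  have "energy d En (U * A * adj U) \<ge> - (\<Sum>i<d. \<Sum>j<d. \<bar>En i\<bar> * \<bar>lam j\<bar>)" if U: "unitary d U" for U
  proof -
    have "U * A * adj U = (U * W) * diagm d lam * adj (U * W)"
      unfolding AW using sandwich_mult[OF unitary_carrier[OF U] unitary_carrier[OF W]] by simp
    then show ?thesis using energy_unitary_sandwich_diagm_lower_bound[OF unitary_mult[OF U W]] by simp
  qed
  then show ?thesis unfolding bdd_below_def by blast
qed

lemma passive_energy_le:
  assumes "A \<in> carrier_mat d d" "hermitian A" "unitary d U"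
  shows "passive_energy d En A \<le> energy d En (U * A * adj U)"
  unfolding passive_energy_def
  by (rule cINF_lower[OF bdd_below_energy_unitary_orbit[OF assms(1,2)]]) (use assms(3) in simp)

lemma ergotropy_nonneg:
  assumes "A \<in> carrier_mat d d" "hermitian A"
  shows "0 \<le> ergotropy d En A"
  using passive_energy_le[OF assms unitary_one] assms(1) unfolding ergotropy_eq by simp

lemma passive_energy_le_energy_kraus_apply:
  assumes Ks: "unital_kraus d Ks" and mono: "mono_on {..<d} En"
    and \<rho>: "\<rho> \<in> carrier_mat d d" "hermitian \<rho>"
  shows "passive_energy d En \<rho> \<le> energy d En (kraus_apply d Ks \<rho>)"
proof -
  have Kc: "\<forall>K\<in>set Ks. K \<in> carrier_mat d d" using Ks unfolding unital_kraus_def by auto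
  obtain W lam where W: "unitary d W" and \<rho>W: "\<rho> = W * diagm d lam * adj W"
    using hermitian_spectral_decomposition[OF \<rho>] by blast
  have Wc: "W \<in> carrier_mat d d" using W unitary_carrier by auto
  define Bs where "Bs = map (\<lambda>K. 1\<^sub>m d * K * W) Ks"
  obtain \<pi> where \<pi>: "\<pi> permutes {..<d}" and
    le: "energy d En (perm_mat d \<pi> * diagm d lam * adj (perm_mat d \<pi>)) \<le> energy d En (kraus_apply d Bs (diagm d lam))"
    using energy_perm_le_kraus_apply_diagm[OF unital_kraus_map_mult[OF Ks unitary_one W] mono]
    unfolding Bs_def by blast
  define U where "U = perm_mat d \<pi> * adj W"
  have "passive_energy d En \<rho> \<le> energy d En (U * \<rho> * adj U)"
    unfolding U_def by (rule passive_energy_le[OF \<rho> unitary_mult[OF unitary_perm_mat[OF \<pi>] unitary_adj[OF W]]])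
  also have "U * \<rho> * adj U = perm_mat d \<pi> * diagm d lam * adj (perm_mat d \<pi>)"
  proof -
    have "adj W * \<rho> * adj (adj W) = (adj W * W) * diagm d lam * adj (adj W * W)"
      unfolding \<rho>W using sandwich_mult[OF adj_carrier[OF Wc] Wc diagm_carrier] by simp
    also have "\<dots> = diagm d lam" using W unfolding unitary_def by simp
    finally show ?thesis
      unfolding U_def using sandwich_mult[OF unitary_carrier[OF unitary_perm_mat[OF \<pi>]] adj_carrier[OF Wc] \<rho>(1)]
      by simp
  qed
  also note le
  also have "kraus_apply d Bs (diagm d lam) = 1\<^sub>m d * kraus_apply d Ks \<rho> * adj (1\<^sub>m d)"
    unfolding Bs_def \<rho>W by (rule kraus_apply_map_mult[OF Kc one_carrier_mat Wc diagm_carrier])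
  also have "\<dots> = kraus_apply d Ks \<rho>" using kraus_apply_carrier[OF Kc \<rho>(1)] by simp
  finally show ?thesis .
qed

text \<open>Unital channels do not lower the passive energy, since composing with a unitary keeps the
  channel unital.\<close>

lemma passive_energy_le_passive_energy_kraus_apply:
  assumes Ks: "unital_kraus d Ks" and mono: "mono_on {..<d} En"
    and \<rho>: "\<rho> \<in> carrier_mat d d" "hermitian \<rho>"
  shows "passive_energy d En \<rho> \<le> passive_energy d En (kraus_apply d Ks \<rho>)"
  unfolding passive_energy_def[of d En "kraus_apply d Ks \<rho>"]
proof (rule cINF_greatest)
  show "{U. unitary d U} \<noteq> {}" using unitary_one by blast
  fix V assume "V \<in> {U. unitary d U}"
  then have V: "unitary d V" by simp
  have Kc: "\<forall>K\<in>set Ks. K \<in> carrier_mat d d" using Ks unfolding unital_kraus_def by auto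
  have "V * kraus_apply d Ks \<rho> * adj V = kraus_apply d (map (\<lambda>K. V * K * 1\<^sub>m d) Ks) \<rho>"
    using kraus_apply_map_mult[OF Kc unitary_carrier[OF V] one_carrier_mat \<rho>(1)] \<rho>(1) by simp
  then show "passive_energy d En \<rho> \<le> energy d En (V * kraus_apply d Ks \<rho> * adj V)"
    using passive_energy_le_energy_kraus_apply[OF unital_kraus_map_mult[OF Ks V unitary_one] mono \<rho>]
    by simp
qed

lemma ergotropy_kraus_apply_le:
  assumes Ks: "unital_kraus d Ks" and mono: "mono_on {..<d} En"
    and \<rho>: "\<rho> \<in> carrier_mat d d" "hermitian \<rho>"
    and energy_le: "energy d En (kraus_apply d Ks \<rho>) \<le> energy d En \<rho>"
  shows "ergotropy d En (kraus_apply d Ks \<rho>) \<le> ergotropy d En \<rho>"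
  using passive_energy_le_passive_energy_kraus_apply[OF Ks mono \<rho>] energy_le
  unfolding ergotropy_eq by simp

lemma sandwich_linear_combination:
  assumes V: "V \<in> carrier_mat d d" and X: "X \<in> carrier_mat d d" and Y: "Y \<in> carrier_mat d d"
  shows "V * (a \<cdot>\<^sub>m X + b \<cdot>\<^sub>m Y) * adj V = a \<cdot>\<^sub>m (V * X * adj V) + b \<cdot>\<^sub>m (V * Y * adj V)"
proof -
  have "V * (a \<cdot>\<^sub>m X + b \<cdot>\<^sub>m Y) = V * (a \<cdot>\<^sub>m X) + V * (b \<cdot>\<^sub>m Y)"
    by (rule mult_add_distrib_mat[of _ d d]) (use V X Y in auto)
  also have "\<dots> = a \<cdot>\<^sub>m (V * X) + b \<cdot>\<^sub>m (V * Y)"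
    using mult_smult_distrib[OF V X] mult_smult_distrib[OF V Y] by simp
  finally have "V * (a \<cdot>\<^sub>m X + b \<cdot>\<^sub>m Y) * adj V = (a \<cdot>\<^sub>m (V * X) + b \<cdot>\<^sub>m (V * Y)) * adj V"
    by simp
  also have "\<dots> = (a \<cdot>\<^sub>m (V * X)) * adj V + (b \<cdot>\<^sub>m (V * Y)) * adj V"
    by (rule add_mult_distrib_mat[of _ d d]) (use V X Y in auto)
  also have "\<dots> = a \<cdot>\<^sub>m (V * X * adj V) + b \<cdot>\<^sub>m (V * Y * adj V)"
    using mult_smult_assoc_mat[of "V * X" d d "adj V" d a] mult_smult_assoc_mat[of "V * Y" d d "adj V" d b] V X Y
    by simp
  finally show ?thesis .
qed

lemma energy_linear_combination:
  assumes "X \<in> carrier_mat d d" "Y \<in> carrier_mat d d"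
  shows "energy d En (complex_of_real p \<cdot>\<^sub>m X + complex_of_real q \<cdot>\<^sub>m Y) = p * energy d En X + q * energy d En Y"
  using assms by (simp add: energy_add energy_smult)

lemma ergotropy_convex:
  assumes A: "A \<in> carrier_mat d d" "hermitian A" and B: "B \<in> carrier_mat d d" "hermitian B"
    and "0 \<le> p" "0 \<le> q"
  shows "ergotropy d En (complex_of_real p \<cdot>\<^sub>m A + complex_of_real q \<cdot>\<^sub>m B)
    \<le> p * ergotropy d En A + q * ergotropy d En B"
proof -
  have "p * passive_energy d En A + q * passive_energy d En B
      \<le> passive_energy d En (complex_of_real p \<cdot>\<^sub>m A + complex_of_real q \<cdot>\<^sub>m B)"
    unfolding passive_energy_def[of d En "_ + _"]
  proof (rule cINF_greatest)
    show "{U. unitary d U} \<noteq> {}" using unitary_one by blast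
    fix U assume "U \<in> {U. unitary d U}"
    then have U: "unitary d U" by simp
    have Uc: "U \<in> carrier_mat d d" using unitary_carrier[OF U] .
    have "p * passive_energy d En A + q * passive_energy d En B
        \<le> p * energy d En (U * A * adj U) + q * energy d En (U * B * adj U)"
      using passive_energy_le[OF A U] passive_energy_le[OF B U] \<open>0 \<le> p\<close> \<open>0 \<le> q\<close>
      by (intro add_mono mult_left_mono) auto
    also have "\<dots> = energy d En (U * (complex_of_real p \<cdot>\<^sub>m A + complex_of_real q \<cdot>\<^sub>m B) * adj U)"
      unfolding sandwich_linear_combination[OF Uc A(1) B(1)]
      by (rule energy_linear_combination[symmetric]) (use Uc A B in auto)
    finally show "p * passive_energy d En A + q * passive_energy d En B
        \<le> energy d En (U * (complex_of_real p \<cdot>\<^sub>m A + complex_of_real q \<cdot>\<^sub>m B) * adj U)" .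
  qed
  then show ?thesis using A B unfolding ergotropy_eq by (simp add: energy_linear_combination algebra_simps)
qed


section \<open>Energy-preserving and unital channels\<close>

lemma quantum_channel_kraus:
  assumes "quantum_channel d \<Phi>"
  obtains Ks where "\<forall>K\<in>set Ks. K \<in> carrier_mat d d" "sum_mat_list d (\<lambda>K. adj K * K) Ks = 1\<^sub>m d"
    "\<And>X. X \<in> carrier_mat d d \<Longrightarrow> \<Phi> X = kraus_apply d Ks X"
  using assms unfolding quantum_channel_def sum_mat_list_def kraus_apply_def by blast

lemma psd_diagm:
  assumes "\<And>i. 0 \<le> lam i"
  shows "psd d (diagm d lam)"
proof -
  have "hermitian (diagm d lam)" unfolding hermitian_def by (rule eq_matI) (auto simp: diagm_def)
  moreover have "0 \<le> Re (conjugate v \<bullet> (diagm d lam *\<^sub>v v))" if v: "v \<in> carrier_vec d" for v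
  proof -
    have "(diagm d lam *\<^sub>v v) $ a = complex_of_real (lam a) * v $ a" if a: "a < d" for a
    proof -
      have "(diagm d lam *\<^sub>v v) $ a = (\<Sum>b\<in>{0..<d}. diagm d lam $$ (a,b) * v $ b)"
        using v a by (simp add: scalar_prod_def mult_mat_vec_def row_def)
      also have "\<dots> = (\<Sum>b\<in>{a}. diagm d lam $$ (a,b) * v $ b)"
        using a by (intro sum.mono_neutral_right) (auto simp: diagm_def)
      finally show ?thesis using a by (simp add: diagm_def)
    qed
    then have "conjugate v \<bullet> (diagm d lam *\<^sub>v v) = (\<Sum>a\<in>{0..<d}. complex_of_real (lam a) * (v $ a * cnj (v $ a)))"
      using v by (auto simp: scalar_prod_def mult.commute mult.left_commute intro!: sum.cong)
    also have "\<dots> = (\<Sum>a\<in>{0..<d}. complex_of_real (lam a * (cmod (v $ a))\<^sup>2))"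
      by (simp only: complex_norm_square[symmetric] of_real_mult)
    finally show ?thesis using assms by (simp add: Re_sum sum_nonneg)
  qed
  ultimately show ?thesis unfolding psd_def by auto
qed

lemma density_basis_state:
  assumes "j < d"
  shows "density d (diagm d (\<lambda>a. if a = j then 1 else 0))"
proof -
  have "mtrace (diagm d (\<lambda>a. if a = j then 1 else 0)) = (\<Sum>a<d. if a = j then 1 else 0)"
    unfolding mtrace_def by (intro sum.cong) (auto simp: diagm_def)
  then show ?thesis using assms unfolding density_def by (simp add: psd_diagm)
qed

text \<open>Feeding the basis state \<open>|j\<rangle>\<langle>j|\<close> to an energy-preserving channel shows that its Kraus
  operators are diagonal, with \<open>\<Sum>\<^sub>K |K\<^sub>i\<^sub>i|\<^sup>2 = 1\<close>.\<close>

lemma energy_preserving_kraus_weight: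
  assumes Ks: "\<forall>K\<in>set Ks. K \<in> carrier_mat d d"
    and \<Phi>: "\<And>X. X \<in> carrier_mat d d \<Longrightarrow> \<Phi> X = kraus_apply d Ks X"
    and ep: "energy_preserving d \<Phi>" and i: "i < d" and j: "j < d"
  shows "kraus_weight Ks i j = (if i = j then 1 else 0)"
proof -
  define R where "R = diagm d (\<lambda>a. if a = j then 1 else 0)"
  have "(\<Sum>l<d. kraus_weight Ks i l * (if l = j then 1 else 0)) = kraus_weight Ks i j"
    using j by (simp add: if_distrib sum.delta' cong: if_cong)
  then have "complex_of_real (kraus_weight Ks i j) = kraus_apply d Ks R $$ (i,i)"
    unfolding R_def diag_kraus_apply_diagm[OF Ks i] by simp
  also have "\<dots> = R $$ (i,i)"
  proof -
    have "\<forall>i<d. \<Phi> R $$ (i,i) = R $$ (i,i)"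
      using ep density_basis_state[OF j] unfolding energy_preserving_def R_def by blast
    then show ?thesis using \<Phi>[of R] i unfolding R_def by simp
  qed
  also have "\<dots> = complex_of_real (if i = j then 1 else 0)" using i by (simp add: R_def diagm_def)
  finally show ?thesis by (simp only: of_real_eq_iff)
qed

lemma kraus_weight_eq_0_entry:
  assumes "kraus_weight Ks i j = 0" "K \<in> set Ks"
  shows "K $$ (i,j) = 0"
proof -
  obtain k where k: "k < length Ks" "K = Ks ! k" using assms(2) by (auto simp: in_set_conv_nth)
  have "\<forall>l\<in>{..<length Ks}. (cmod (Ks ! l $$ (i,j)))\<^sup>2 = 0"
    using assms(1) unfolding kraus_weight_def by (subst sum_nonneg_eq_0_iff[symmetric]) auto
  then show ?thesis using k by auto
qed

lemma energy_preserving_unital: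
  assumes Ks: "\<forall>K\<in>set Ks. K \<in> carrier_mat d d"
    and \<Phi>: "\<And>X. X \<in> carrier_mat d d \<Longrightarrow> \<Phi> X = kraus_apply d Ks X"
    and ep: "energy_preserving d \<Phi>"
  shows "sum_mat_list d (\<lambda>K. K * adj K) Ks = 1\<^sub>m d"
proof (rule eq_matI)
  note weight = energy_preserving_kraus_weight[OF Ks \<Phi> ep]
  fix a b assume "a < dim_row (1\<^sub>m d)" "b < dim_col (1\<^sub>m d)"
  then have a: "a < d" and b: "b < d" by auto
  show "sum_mat_list d (\<lambda>K. K * adj K) Ks $$ (a,b) = 1\<^sub>m d $$ (a,b)"
  proof (cases "a = b")
    case True
    have "(\<Sum>j<d. kraus_weight Ks a j) = 1" using a by (simp add: weight sum.delta)
    then show ?thesis using kraus_weight_row_sum[OF Ks a] True a by simp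
  next
    case False
    have "(K * adj K) $$ (a,b) = 0" if K: "K \<in> set Ks" for K
    proof -
      have "K \<in> carrier_mat d d" using Ks K by auto
      then have "(K * adj K) $$ (a,b) = (\<Sum>c\<in>{0..<d}. K $$ (a,c) * cnj (K $$ (b,c)))"
        using a b by (simp add: scalar_prod_def)
      also have "\<dots> = 0"
        using kraus_weight_eq_0_entry[OF _ K] weight a b False
        by (intro sum.neutral) (metis atLeastLessThan_iff mult_eq_0_iff complex_cnj_zero)
      finally show ?thesis .
    qed
    then have "sum_mat_list d (\<lambda>K. K * adj K) Ks $$ (a,b) = 0"
      using Ks a b by (subst index_sum_mat_list) (auto intro!: mult_carrier_mat)
    then show ?thesis using False a b by simp
  qed
qed (use sum_mat_list_carrier[of Ks "\<lambda>K. K * adj K"] Ks in \<open>auto intro!: mult_carrier_mat\<close>)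

lemma channel_unital_kraus:
  assumes "energy_preserving d \<Phi> \<or> unital_energy_nonincreasing d En \<Phi>"
  obtains Ks where "unital_kraus d Ks" "\<And>X. X \<in> carrier_mat d d \<Longrightarrow> \<Phi> X = kraus_apply d Ks X"
proof -
  have "quantum_channel d \<Phi>"
    using assms unfolding energy_preserving_def unital_energy_nonincreasing_def by auto
  then obtain Ks where Ks: "\<forall>K\<in>set Ks. K \<in> carrier_mat d d"
    and tp: "sum_mat_list d (\<lambda>K. adj K * K) Ks = 1\<^sub>m d"
    and \<Phi>: "\<And>X. X \<in> carrier_mat d d \<Longrightarrow> \<Phi> X = kraus_apply d Ks X"
    using quantum_channel_kraus by blast
  have "sum_mat_list d (\<lambda>K. K * adj K) Ks = 1\<^sub>m d"
  proof (cases "energy_preserving d \<Phi>")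
    case True
    show ?thesis by (rule energy_preserving_unital[OF Ks \<Phi> True])
  next
    case False
    then have "\<Phi> (1\<^sub>m d) = 1\<^sub>m d" using assms unfolding unital_energy_nonincreasing_def by auto
    moreover have "sum_mat_list d (\<lambda>K. K * adj K) Ks = kraus_apply d Ks (1\<^sub>m d)"
      unfolding kraus_apply_def using Ks by (intro sum_mat_list_cong) auto
    ultimately show ?thesis using \<Phi>[of "1\<^sub>m d"] by simp
  qed
  then show thesis using that Ks tp \<Phi> unfolding unital_kraus_def by blast
qed

lemma channel_energy_le:
  assumes ch: "energy_preserving d \<Phi> \<or> unital_energy_nonincreasing d En \<Phi>"
    and \<rho>: "density d \<rho>" and \<Phi>\<rho>: "\<Phi> \<rho> \<in> carrier_mat d d"
  shows "energy d En (\<Phi> \<rho>) \<le> energy d En \<rho>"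
proof (cases "energy_preserving d \<Phi>")
  case True
  then have "\<forall>i<d. \<Phi> \<rho> $$ (i,i) = \<rho> $$ (i,i)" using \<rho> unfolding energy_preserving_def by auto
  moreover have "\<rho> \<in> carrier_mat d d" using \<rho> unfolding density_def psd_def by auto
  ultimately show ?thesis using \<Phi>\<rho> by (simp add: energy_eq_sum)
next
  case False
  then show ?thesis using ch \<rho> unfolding unital_energy_nonincreasing_def by auto
qed

theorem mainTheorem1:
  fixes d :: nat and En :: "nat \<Rightarrow> real" and \<E> :: "complex mat \<Rightarrow> complex mat"
    and \<tau> :: "complex mat" and p :: real
  assumes "d \<ge> 1"
    and "strict_mono_on {..<d} En"
    and "energy_preserving d \<E> \<or> unital_energy_nonincreasing d En \<E>"
    and "passive_state d En \<tau>"
    and "0 \<le> p" and "p \<le> 1"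
    and "density d \<rho>"
  shows "ergotropy d En (complex_of_real p \<cdot>\<^sub>m \<E> \<rho> + complex_of_real (1 - p) \<cdot>\<^sub>m \<tau>)
           \<le> ergotropy d En \<rho>"
proof -
  have mono: "mono_on {..<d} En" by (rule strict_mono_on_imp_mono_on[OF assms(2)])
  have \<rho>: "\<rho> \<in> carrier_mat d d" "hermitian \<rho>" using assms(7) unfolding density_def psd_def by auto
  have \<tau>: "\<tau> \<in> carrier_mat d d" "hermitian \<tau>" and erg_\<tau>: "ergotropy d En \<tau> = 0"
    using assms(4) unfolding passive_state_def density_def psd_def by auto
  obtain Ks where Ks: "unital_kraus d Ks" and \<E>: "\<And>X. X \<in> carrier_mat d d \<Longrightarrow> \<E> X = kraus_apply d Ks X"
    using channel_unital_kraus[OF assms(3)] by blast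
  have Kc: "\<forall>K\<in>set Ks. K \<in> carrier_mat d d" using Ks unfolding unital_kraus_def by auto
  have \<E>\<rho>: "\<E> \<rho> \<in> carrier_mat d d" "hermitian (\<E> \<rho>)"
    unfolding \<E>[OF \<rho>(1)] by (simp_all add: kraus_apply_carrier hermitian_kraus_apply Kc \<rho>)
  have "ergotropy d En (complex_of_real p \<cdot>\<^sub>m \<E> \<rho> + complex_of_real (1 - p) \<cdot>\<^sub>m \<tau>)
      \<le> p * ergotropy d En (\<E> \<rho>) + (1 - p) * ergotropy d En \<tau>"
    by (rule ergotropy_convex[OF \<E>\<rho> \<tau>]) (use assms(5,6) in auto)
  also have "\<dots> = p * ergotropy d En (\<E> \<rho>)" using erg_\<tau> by simp
  also have "\<dots> \<le> p * ergotropy d En \<rho>"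
    using ergotropy_kraus_apply_le[OF Ks mono \<rho>] channel_energy_le[OF assms(3,7) \<E>\<rho>(1)] \<E>[OF \<rho>(1)] assms(5)
    by (intro mult_left_mono) auto
  also have "\<dots> \<le> ergotropy d En \<rho>"
    using ergotropy_nonneg[OF \<rho>] assms(5,6) by (rule mult_left_le_one_le)
  finally show ?thesis .
qed

end
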